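(* Let $\Gamma$ be a topological group, $A$ a regular CW-complex, and $\mathcal I$ a cellular $(\Gamma,A)$-groupoid. Then for any topological group $G$: (a) the restriction maps $\mathrm{res}_0\colon\mathrm{Rep}^G_{\mathrm{cell}}(\mathcal I)\to\mathrm{Rep}^G_{\mathrm{cell}}(\mathcal I^{(0)})$ and $\mathrm{res}_0\colon\overline{\mathrm{Rep}}^{\,G}_{\mathrm{cell}}(\mathcal I)\to\overline{\mathrm{Rep}}^{\,G}_{\mathrm{cell}}(\mathcal I^{(0)})$ are injective; (b) the restriction maps $\mathrm{res}_1\colon\mathrm{Rep}^G_{\mathrm{cell}}(\mathcal I)\to\mathrm{Rep}^G_{\mathrm{cell}}(\mathcal I^{(1)})$ and $\mathrm{res}_1\colon\overline{\mathrm{Rep}}^{\,G}_{\mathrm{cell}}(\mathcal I)\to\overline{\mathrm{Rep}}^{\,G}_{\mathrm{cell}}(\mathcal I^{(1)})$ are bijective.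
   Context: A CW-complex $A$ is regular if each cell $e$ has a characteristic map $\sigma_e\colon\mathbb D^{d(e)}\to A$ which is an embedding sending $\mathbb S^{d(e)-1}$ onto a subcomplex. For $a\in A$, $e(a)$ is the cell whose open cell contains $a$; $f\le e$ means $f$ is a face of $e$. A $(\Gamma,A)$-groupoid is a subspace $\mathcal I\subset\Gamma\times A$ with $\mathcal I\cap(\Gamma\times\{a\})=\tilde{\mathcal I}_a\times\{a\}$, $\tilde{\mathcal I}_a$ a closed subgroup (identified with $\mathcal I_a$). It is cellular if $\mathcal I_a=\mathcal I_b$ whenever $e(a)=e(b)$ (write $\mathcal I(e)$) and it is locally maximal (for each $a$ and neighbourhood $B$ of $a$ there is an open $U$, $a\in U\subset B$, and a homotopy $\rho_t\colon U\to U$ with $\rho_0=\mathrm{id}$, $\rho_1\equiv a$, $\mathcal I_u\subset\mathcal I_{\rho_t(u)}$); then $\mathcal I(e)\subset\mathcal I(f)$ for $f\le e$. $\mathcal I^{(k)}$ denotes the restriction of $\mathcal I$ over the $k$-skeleton $A^{(k)}$ (a cellular groupoid over $A^{(k)}$). A cellular representation of $\mathcal I$ in $G$ is a continuous map $\beta\colon\mathcal I\to G$, restricting to homomorphisms on each $\mathcal I_a$, with $\beta_a=\beta_b$ whenever $e(a)=e(b)$; equivalently a family $\beta_e\in\mathrm{Hom}(\mathcal I(e),G)$ with $\beta_e=\beta_f|_{\mathcal I(e)}$ for $f\le e$. Two are conjugate if $\beta'=g^{-1}\beta g$ for a single $g\in G$. $\mathrm{Rep}^G_{\mathrm{cell}}(\mathcal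 I)$ is the set of conjugacy classes of cellular representations. With $\overline{\mathrm{Hom}}(K,G)$ the set of $G$-conjugacy classes of continuous homomorphisms $K\to G$, $\overline{\mathrm{Rep}}^{\,G}_{\mathrm{cell}}(\mathcal I)$ is the set of families $(b_e)_e$ with $b_e\in\overline{\mathrm{Hom}}(\mathcal I(e),G)$ and $b_e=b_f|_{\mathcal I(e)}$ whenever $f\le e$. The same definitions apply to $\mathcal I^{(k)}$ over $A^{(k)}$, and $\mathrm{res}_k$ denotes restriction to cells of $A^{(k)}$. *)

theory Defs
  imports "HOL-Analysis.Analysis" "HOL-Algebra.Group"
begin

definition topological_group :: "'g monoid \<Rightarrow> 'g topology \<Rightarrow> bool" where
  "topological_group \<Gamma> T \<longleftrightarrow>
     group \<Gamma> \<and> topspace T = carrier \<Gamma> \<and>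
     continuous_map (prod_topology T T) T (\<lambda>(x, y). x \<otimes>\<^bsub>\<Gamma>\<^esub> y) \<and>
     continuous_map T T (\<lambda>x. inv\<^bsub>\<Gamma>\<^esub> x)"

text \<open>The closed disc D^d and its boundary sphere S^(d-1), inside R^d realised as
  the functions nat => real vanishing from index d on (library Euclidean_space d).\<close>
definition disc_set :: "nat \<Rightarrow> (nat \<Rightarrow> real) set" where
  "disc_set d = {x \<in> topspace (Euclidean_space d). (\<Sum>i<d. (x i)\<^sup>2) \<le> 1}"

definition sphere_set :: "nat \<Rightarrow> (nat \<Rightarrow> real) set" where
  "sphere_set d = {x \<in> topspace (Euclidean_space d). (\<Sum>i<d. (x i)\<^sup>2) = 1}"

definition disc_top :: "nat \<Rightarrow> (nat \<Rightarrow> real) topology" where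
  "disc_top d = subtopology (Euclidean_space d) (disc_set d)"

text \<open>X is the space A, C the set of (open) cells, dm e = d(e), and \<sigma> e the
  characteristic map of the cell e.\<close>
definition regular_CW ::
  "'a topology \<Rightarrow> 'a set set \<Rightarrow> ('a set \<Rightarrow> nat) \<Rightarrow> ('a set \<Rightarrow> (nat \<Rightarrow> real) \<Rightarrow> 'a) \<Rightarrow> bool" where
  "regular_CW X C dm \<sigma> \<longleftrightarrow>
     Hausdorff_space X \<and>
     \<comment> \<open>the open cells partition the space\<close>
     (\<forall>e\<in>C. e \<noteq> {}) \<and> (\<forall>e\<in>C. \<forall>f\<in>C. e \<noteq> f \<longrightarrow> e \<inter> f = {}) \<and> \<Union>C = topspace X \<and>
     \<comment> \<open>characteristic maps are embeddings, mapping the open disc onto the cell\<close>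
     (\<forall>e\<in>C. embedding_map (disc_top (dm e)) X (\<sigma> e)) \<and>
     (\<forall>e\<in>C. \<sigma> e ` (disc_set (dm e) - sphere_set (dm e)) = e) \<and>
     \<comment> \<open>the boundary sphere is mapped onto a (finite) subcomplex of lower-dimensional cells\<close>
     (\<forall>e\<in>C. \<exists>F. F \<subseteq> C \<and> finite F \<and> (\<forall>f\<in>F. dm f < dm e) \<and>
                 \<sigma> e ` sphere_set (dm e) = \<Union>F) \<and>
     \<comment> \<open>weak topology\<close>
     (\<forall>S. S \<subseteq> topspace X \<longrightarrow>
          (closedin X S \<longleftrightarrow> (\<forall>e\<in>C. closedin X (S \<inter> \<sigma> e ` disc_set (dm e)))))"

definition is_face :: "'a topology \<Rightarrow> 'a set \<Rightarrow> 'a set \<Rightarrow> bool" where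
  "is_face X f e \<longleftrightarrow> f \<subseteq> X closure_of e"

definition skel_cells :: "'a set set \<Rightarrow> ('a set \<Rightarrow> nat) \<Rightarrow> nat \<Rightarrow> 'a set set" where
  "skel_cells C dm k = {e \<in> C. dm e \<le> k}"

definition fiber :: "('g \<times> 'a) set \<Rightarrow> 'a \<Rightarrow> 'g set" where
  "fiber I a = {\<gamma>. (\<gamma>, a) \<in> I}"

text \<open>The subgroup I(e) attached to a cell e (the common isotropy group of its points).\<close>
definition cell_grp :: "('g \<times> 'a) set \<Rightarrow> 'a set \<Rightarrow> 'g set" where
  "cell_grp I e = fiber I (SOME a. a \<in> e)"

definition groupoid ::
  "'g monoid \<Rightarrow> 'g topology \<Rightarrow> 'a topology \<Rightarrow> ('g \<times> 'a) set \<Rightarrow> bool" where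
  "groupoid \<Gamma> T X I \<longleftrightarrow>
     I \<subseteq> carrier \<Gamma> \<times> topspace X \<and>
     (\<forall>a\<in>topspace X. subgroup (fiber I a) \<Gamma> \<and> closedin T (fiber I a))"

definition locally_maximal :: "'a topology \<Rightarrow> ('g \<times> 'a) set \<Rightarrow> bool" where
  "locally_maximal X I \<longleftrightarrow>
     (\<forall>a\<in>topspace X. \<forall>B. (\<exists>V. openin X V \<and> a \<in> V \<and> V \<subseteq> B) \<longrightarrow>
        (\<exists>U \<rho>. openin X U \<and> a \<in> U \<and> U \<subseteq> B \<and>
           continuous_map (prod_topology (top_of_set {0..1::real}) (subtopology X U))
                          (subtopology X U) \<rho> \<and>
           (\<forall>u\<in>U. \<rho> (0, u) = u \<and> \<rho> (1, u) = a) \<and>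
           (\<forall>t\<in>{0..1}. \<forall>u\<in>U. fiber I u \<subseteq> fiber I (\<rho> (t, u)))))"

definition cellular_groupoid ::
  "'g monoid \<Rightarrow> 'g topology \<Rightarrow> 'a topology \<Rightarrow> 'a set set \<Rightarrow> ('g \<times> 'a) set \<Rightarrow> bool" where
  "cellular_groupoid \<Gamma> T X C I \<longleftrightarrow>
     groupoid \<Gamma> T X I \<and>
     (\<forall>e\<in>C. \<forall>a\<in>e. \<forall>b\<in>e. fiber I a = fiber I b) \<and>
     locally_maximal X I"

text \<open>Continuous homomorphisms K \<rightarrow> G, K a subgroup of \<Gamma> with the subspace topology
  (represented by functions; only values on K matter).\<close>
definition cont_hom ::
  "'g monoid \<Rightarrow> 'g topology \<Rightarrow> 'g set \<Rightarrow> 'h monoid \<Rightarrow> 'h topology \<Rightarrow> ('g \<Rightarrow> 'h) \<Rightarrow> bool" where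
  "cont_hom \<Gamma> T K G TG \<phi> \<longleftrightarrow>
     (\<forall>x\<in>K. \<phi> x \<in> carrier G) \<and>
     (\<forall>x\<in>K. \<forall>y\<in>K. \<phi> (x \<otimes>\<^bsub>\<Gamma>\<^esub> y) = \<phi> x \<otimes>\<^bsub>G\<^esub> \<phi> y) \<and>
     continuous_map (subtopology T K) TG \<phi>"

definition conj_on :: "'h monoid \<Rightarrow> 'g set \<Rightarrow> ('g \<Rightarrow> 'h) \<Rightarrow> ('g \<Rightarrow> 'h) \<Rightarrow> bool" where
  "conj_on G K \<phi> \<psi> \<longleftrightarrow>
     (\<exists>g\<in>carrier G. \<forall>x\<in>K. \<psi> x = inv\<^bsub>G\<^esub> g \<otimes>\<^bsub>G\<^esub> \<phi> x \<otimes>\<^bsub>G\<^esub> g)"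

text \<open>Cellular representations of I restricted to the cells in S (S = all cells, or the
  cells of a skeleton): families \<beta>_e \<in> Hom(I(e),G) with \<beta>_e = \<beta>_f|I(e) for f \<le> e.\<close>
definition cell_rep ::
  "'g monoid \<Rightarrow> 'g topology \<Rightarrow> 'h monoid \<Rightarrow> 'h topology \<Rightarrow> 'a topology \<Rightarrow> ('g \<times> 'a) set
    \<Rightarrow> 'a set set \<Rightarrow> ('a set \<Rightarrow> 'g \<Rightarrow> 'h) \<Rightarrow> bool" where
  "cell_rep \<Gamma> T G TG X I S \<beta> \<longleftrightarrow>
     (\<forall>e\<in>S. cont_hom \<Gamma> T (cell_grp I e) G TG (\<beta> e)) \<and>
     (\<forall>e\<in>S. \<forall>f\<in>S. is_face X f e \<longrightarrow> (\<forall>x\<in>cell_grp I e. \<beta> e x = \<beta> f x))"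

definition rep_rel ::
  "'g monoid \<Rightarrow> 'g topology \<Rightarrow> 'h monoid \<Rightarrow> 'h topology \<Rightarrow> 'a topology \<Rightarrow> ('g \<times> 'a) set
    \<Rightarrow> 'a set set \<Rightarrow> (('a set \<Rightarrow> 'g \<Rightarrow> 'h) \<times> ('a set \<Rightarrow> 'g \<Rightarrow> 'h)) set" where
  "rep_rel \<Gamma> T G TG X I S =
     {(\<beta>, \<beta>'). cell_rep \<Gamma> T G TG X I S \<beta> \<and> cell_rep \<Gamma> T G TG X I S \<beta>' \<and>
        (\<exists>g\<in>carrier G. \<forall>e\<in>S. \<forall>x\<in>cell_grp I e. \<beta>' e x = inv\<^bsub>G\<^esub> g \<otimes>\<^bsub>G\<^esub> \<beta> e x \<otimes>\<^bsub>G\<^esub> g)}"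

definition Rep_cell ::
  "'g monoid \<Rightarrow> 'g topology \<Rightarrow> 'h monoid \<Rightarrow> 'h topology \<Rightarrow> 'a topology \<Rightarrow> ('g \<times> 'a) set
    \<Rightarrow> 'a set set \<Rightarrow> ('a set \<Rightarrow> 'g \<Rightarrow> 'h) set set" where
  "Rep_cell \<Gamma> T G TG X I S =
     {\<beta>. cell_rep \<Gamma> T G TG X I S \<beta>} // rep_rel \<Gamma> T G TG X I S"

text \<open>Elements of \<overline>Rep: families (b_e) of conjugacy classes b_e \<in> \<overline>Hom(I(e),G), with
  b_e = b_f|I(e) for f \<le> e. A family is represented by a family of representatives;
  two representing families give the same element iff they are conjugate cell by cell.\<close>
definition bar_rep ::
  "'g monoid \<Rightarrow> 'g topology \<Rightarrow> 'h monoid \<Rightarrow> 'h topology \<Rightarrow> 'a topology \<Rightarrow> ('g \<times> 'a) set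
    \<Rightarrow> 'a set set \<Rightarrow> ('a set \<Rightarrow> 'g \<Rightarrow> 'h) \<Rightarrow> bool" where
  "bar_rep \<Gamma> T G TG X I S b \<longleftrightarrow>
     (\<forall>e\<in>S. cont_hom \<Gamma> T (cell_grp I e) G TG (b e)) \<and>
     (\<forall>e\<in>S. \<forall>f\<in>S. is_face X f e \<longrightarrow> conj_on G (cell_grp I e) (b f) (b e))"

definition bar_rel ::
  "'g monoid \<Rightarrow> 'g topology \<Rightarrow> 'h monoid \<Rightarrow> 'h topology \<Rightarrow> 'a topology \<Rightarrow> ('g \<times> 'a) set
    \<Rightarrow> 'a set set \<Rightarrow> (('a set \<Rightarrow> 'g \<Rightarrow> 'h) \<times> ('a set \<Rightarrow> 'g \<Rightarrow> 'h)) set" where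
  "bar_rel \<Gamma> T G TG X I S =
     {(b, b'). bar_rep \<Gamma> T G TG X I S b \<and> bar_rep \<Gamma> T G TG X I S b' \<and>
        (\<forall>e\<in>S. conj_on G (cell_grp I e) (b e) (b' e))}"

definition Rep_bar ::
  "'g monoid \<Rightarrow> 'g topology \<Rightarrow> 'h monoid \<Rightarrow> 'h topology \<Rightarrow> 'a topology \<Rightarrow> ('g \<times> 'a) set
    \<Rightarrow> 'a set set \<Rightarrow> ('a set \<Rightarrow> 'g \<Rightarrow> 'h) set set" where
  "Rep_bar \<Gamma> T G TG X I S =
     {b. bar_rep \<Gamma> T G TG X I S b} // bar_rel \<Gamma> T G TG X I S"

text \<open>Restriction maps on classes: a class is sent to the class (for the smaller cell set S)
  of the restrictions of its members; a family restricted to S is the same function,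
  of which only the values on cells in S matter.\<close>
definition res_rep ::
  "'g monoid \<Rightarrow> 'g topology \<Rightarrow> 'h monoid \<Rightarrow> 'h topology \<Rightarrow> 'a topology \<Rightarrow> ('g \<times> 'a) set
    \<Rightarrow> 'a set set \<Rightarrow> ('a set \<Rightarrow> 'g \<Rightarrow> 'h) set \<Rightarrow> ('a set \<Rightarrow> 'g \<Rightarrow> 'h) set" where
  "res_rep \<Gamma> T G TG X I S Cl = rep_rel \<Gamma> T G TG X I S `` Cl"

definition res_bar ::
  "'g monoid \<Rightarrow> 'g topology \<Rightarrow> 'h monoid \<Rightarrow> 'h topology \<Rightarrow> 'a topology \<Rightarrow> ('g \<times> 'a) set
    \<Rightarrow> 'a set set \<Rightarrow> ('a set \<Rightarrow> 'g \<Rightarrow> 'h) set \<Rightarrow> ('a set \<Rightarrow> 'g \<Rightarrow> 'h) set" where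
  "res_bar \<Gamma> T G TG X I S Cl = bar_rel \<Gamma> T G TG X I S `` Cl"

end

theory Submission
  imports Defs
begin

text \<open>Every cell e has a vertex v in its closure, and I(e) \<subseteq> I(v) by local maximality; the
  face condition then forces \<beta>_e = \<beta>_v|I(e), so a cellular representation (or a family of
  conjugacy classes) is determined by its values on the 0-cells, with one conjugating element
  serving for all cells. For surjectivity onto the 1-skeleton, give every cell of dimension
  at least 2 the value at one of its vertices. This is well defined because any two vertices
  of a closed cell are joined by a chain of 1-cells in it: for dimension at least 2 the boundary
  sphere is connected, so its cells cannot split into two families with disjoint closures,
  one edge-connected to a given vertex and the other not.\<close>

section \<open>Discs, spheres and connected unions\<close>

lemma closedin_sum_squares_preimage:
  assumes "closed S"
  shows "closedin (powertop_real UNIV) {x \<in> topspace (Euclidean_space d). (\<Sum>i<d. (x i)\<^sup>2) \<in> S}"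
proof -
  have "continuous_map (powertop_real UNIV) euclideanreal (\<lambda>x::nat\<Rightarrow>real. \<Sum>i<d. (x i)\<^sup>2)"
    by (intro continuous_map_sum continuous_map_real_pow continuous_map_product_projection) auto
  then have "closedin (powertop_real UNIV)
      {x \<in> topspace (powertop_real UNIV). (\<Sum>i<d. (x i)\<^sup>2) \<in> S}"
    using assms by (intro closedin_continuous_map_preimage) auto
  moreover have "{x \<in> topspace (Euclidean_space d). (\<Sum>i<d. (x i)\<^sup>2) \<in> S}
      = topspace (Euclidean_space d) \<inter> {x \<in> topspace (powertop_real UNIV). (\<Sum>i<d. (x i)\<^sup>2) \<in> S}"
    by auto
  ultimately show ?thesis
    using closedin_Int[OF closedin_Euclidean_space] by simp
qed

lemma compactin_disc_top: "compactin (disc_top d) (disc_set d)"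
proof -
  define box where "box = PiE UNIV (\<lambda>i. if i < d then {-1..1} else {0::real})"
  have "compactin (powertop_real UNIV) box"
    by (auto simp: box_def compactin_PiE)
  moreover have "disc_set d \<subseteq> box"
  proof
    fix x assume x: "x \<in> disc_set d"
    have "x i \<in> {-1..1}" if "i < d" for i
    proof -
      have "(x i)\<^sup>2 \<le> (\<Sum>j<d. (x j)\<^sup>2)"
        using that by (intro member_le_sum) auto
      also have "\<dots> \<le> 1" using x by (simp add: disc_set_def)
      finally have "\<bar>x i\<bar> \<le> 1" by (simp add: abs_square_le_1)
      then show ?thesis by auto
    qed
    then show "x \<in> box"
      using x by (auto simp: box_def disc_set_def topspace_Euclidean_space)
  qed
  moreover have "closedin (powertop_real UNIV) (disc_set d)"
    using closedin_sum_squares_preimage[of "{..1}" d] by (simp add: disc_set_def)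
  ultimately have "compactin (powertop_real UNIV) (disc_set d)"
    by (rule closed_compactin)
  then show ?thesis
    by (auto simp: disc_top_def Euclidean_space_def compactin_subtopology disc_set_def
        topspace_Euclidean_space)
qed

lemma sphere_set_subset_closure_of_open_disc:
  "sphere_set d \<subseteq> disc_top d closure_of (disc_set d - sphere_set d)"
proof
  fix x assume x: "x \<in> sphere_set d"
  define h where "h = (\<lambda>t::real. \<lambda>i. if i < d then t * x i else 0)"
  have norm_h: "(\<Sum>i<d. (h t i)\<^sup>2) = t\<^sup>2" for t
  proof -
    have "(\<Sum>i<d. (h t i)\<^sup>2) = t\<^sup>2 * (\<Sum>i<d. (x i)\<^sup>2)"
      by (simp add: h_def power_mult_distrib sum_distrib_left)
    then show ?thesis using x by (simp add: sphere_set_def)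
  qed
  have h_Euclidean: "continuous_map euclideanreal (Euclidean_space d) h"
    unfolding h_def continuous_map_componentwise_Euclidean_space
    by (auto intro!: continuous_intros)
  have h_disc: "h t \<in> disc_set d" if "t \<in> {0..1}" for t
    using that norm_h[of t] continuous_map_image_subset_topspace[OF h_Euclidean]
    by (auto simp: disc_set_def abs_square_le_1)
  have h_cont: "continuous_map (top_of_set {0..1}) (disc_top d) h"
    unfolding disc_top_def continuous_map_in_subtopology
    using h_disc by (auto intro: continuous_map_from_subtopology[OF h_Euclidean])
  have "h ` {0..<1} \<subseteq> disc_set d - sphere_set d"
    using h_disc norm_h by (fastforce simp: sphere_set_def power2_eq_1_iff)
  moreover have "1 \<in> top_of_set {0..1} closure_of {0..<1::real}"
    by (simp add: closure_of_subtopology Int_absorb1 atLeastLessThan_subseteq_atLeastAtMost_iff)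
  then have "h 1 \<in> disc_top d closure_of (h ` {0..<1})"
    using continuous_map_image_closure_subset[OF h_cont] by blast
  moreover have "h 1 = x"
    using x by (auto simp: h_def sphere_set_def topspace_Euclidean_space)
  ultimately show "x \<in> disc_top d closure_of (disc_set d - sphere_set d)"
    using closure_of_mono by blast
qed

lemma sphere_set_nonempty: "d \<ge> 1 \<Longrightarrow> sphere_set d \<noteq> {}"
proof -
  assume "d \<ge> 1"
  then have "(\<lambda>i::nat. if i = 0 then 1 else (0::real)) \<in> sphere_set d"
    by (auto simp: sphere_set_def topspace_Euclidean_space if_distrib[where f="\<lambda>x. x^2"]
        cong: if_cong)
  then show ?thesis by blast
qed

lemma connected_space_nsphere:
  assumes "n \<ge> 1" shows "connected_space (nsphere n)"
proof -
  have hemisphere: "connectedin (nsphere n) (topspace (nsphere n) \<inter> H)"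
    if "contractible_space (subtopology (nsphere n) H)" for H
    using that contractible_imp_connected_space
    by (fastforce simp: connectedin_def subtopology_restrict)
  define p :: "nat \<Rightarrow> real" where "p = (\<lambda>i. if i = 0 then 1 else 0)"
  have "p \<in> topspace (nsphere n) \<inter> {x. 0 \<le> x n} \<inter> (topspace (nsphere n) \<inter> {x. x n \<le> 0})"
    using in_topspace_nsphere[of n] assms by (auto simp: p_def)
  then have "connectedin (nsphere n)
      (topspace (nsphere n) \<inter> {x. 0 \<le> x n} \<union> topspace (nsphere n) \<inter> {x. x n \<le> 0})"
    by (intro connectedin_Un hemisphere contractible_space_upper_hemisphere
        contractible_space_lower_hemisphere) auto
  moreover have "topspace (nsphere n) \<inter> {x. 0 \<le> x n} \<union> topspace (nsphere n) \<inter> {x. x n \<le> 0}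
      = topspace (nsphere n)"
    by auto
  ultimately show ?thesis
    by (simp add: connectedin_topspace)
qed

lemma connectedin_sphere_set:
  assumes "d \<ge> 2" shows "connectedin (disc_top d) (sphere_set d)"
proof -
  obtain n where d: "d = Suc n" and "n \<ge> 1" using assms by (cases d) auto
  have "nsphere n = subtopology (Euclidean_space d) (sphere_set d)"
    unfolding nsphere_def sphere_set_def d lessThan_Suc_atMost
    by (metis subtopology_restrict Collect_conj_eq Collect_mem_eq)
  then have "connectedin (Euclidean_space d) (sphere_set d)"
    using connected_space_nsphere[OF \<open>n \<ge> 1\<close>] by (auto simp: connectedin_def sphere_set_def)
  then show ?thesis
    by (auto simp: disc_top_def connectedin_subtopology sphere_set_def disc_set_def)
qed

lemma connectedin_Union_closure_partition:
  assumes conn: "connectedin X (\<Union>F)" and fin: "finite F" and A: "A \<subseteq> F" "A \<noteq> {}"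
    and nonempty: "\<And>f. f \<in> F \<Longrightarrow> f \<noteq> {}"
    and apart: "\<And>f g. f \<in> A \<Longrightarrow> g \<in> F - A \<Longrightarrow> X closure_of f \<inter> X closure_of g = {}"
  shows "A = F"
proof (rule ccontr)
  assume "A \<noteq> F"
  define E1 where "E1 = \<Union>((closure_of) X ` A)"
  define E2 where "E2 = \<Union>((closure_of) X ` (F - A))"
  have in_closure: "f \<subseteq> X closure_of f" if "f \<in> F" for f
    using that connectedin_subset_topspace[OF conn] by (intro closure_of_subset) blast
  have "closedin X E1" "closedin X E2"
    using fin A(1) by (auto simp: E1_def E2_def intro!: closedin_Union intro: finite_subset)
  moreover have "\<Union>F \<subseteq> E1 \<union> E2"
    using in_closure by (auto simp: E1_def E2_def)
  moreover have "E1 \<inter> E2 = {}"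
    using apart by (auto simp: E1_def E2_def)
  moreover have "E1 \<inter> \<Union>F \<noteq> {}"
  proof -
    obtain f where "f \<in> A" using A(2) by blast
    then show ?thesis
      using A(1) nonempty in_closure by (fastforce simp: E1_def)
  qed
  moreover have "E2 \<inter> \<Union>F \<noteq> {}"
  proof -
    obtain g where "g \<in> F - A" using A(1) \<open>A \<noteq> F\<close> by blast
    then show ?thesis
      using nonempty in_closure by (fastforce simp: E2_def)
  qed
  ultimately show False
    using conn unfolding connectedin_closedin by blast
qed

section \<open>Regular CW-complexes and cellular groupoids\<close>

lemma locally_maximal_fiber_neighbourhood:
  assumes "locally_maximal X I" "p \<in> topspace X"
  obtains U where "openin X U" "p \<in> U" "\<And>u. u \<in> U \<Longrightarrow> fiber I u \<subseteq> fiber I p"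
proof -
  have "\<exists>V. openin X V \<and> p \<in> V \<and> V \<subseteq> topspace X"
    using assms(2) by blast
  then obtain U \<rho> where U: "openin X U" "p \<in> U"
    and \<rho>: "\<forall>u\<in>U. \<rho> (0, u) = u \<and> \<rho> (1, u) = p"
    and fibers: "\<forall>t\<in>{0..1::real}. \<forall>u\<in>U. fiber I u \<subseteq> fiber I (\<rho> (t, u))"
    using mp[OF spec[OF bspec[OF assms(1)[unfolded locally_maximal_def] assms(2)], of "topspace X"]]
    by blast
  have "fiber I u \<subseteq> fiber I p" if "u \<in> U" for u
    using fibers \<rho> that by fastforce
  then show thesis
    using that U by blast
qed

lemma skel_cells_subset: "skel_cells C dm k \<subseteq> C"
  by (auto simp: skel_cells_def)

locale regular_cw =
  fixes X :: "'a topology" and C :: "'a set set" and dm :: "'a set \<Rightarrow> nat"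
    and \<sigma> :: "'a set \<Rightarrow> (nat \<Rightarrow> real) \<Rightarrow> 'a"
  assumes regular_CW: "regular_CW X C dm \<sigma>"
begin

lemma cell_nonempty: "e \<in> C \<Longrightarrow> e \<noteq> {}"
  using regular_CW by (simp add: regular_CW_def)

lemma cells_disjoint: "e \<in> C \<Longrightarrow> f \<in> C \<Longrightarrow> e \<noteq> f \<Longrightarrow> e \<inter> f = {}"
  using regular_CW by (simp add: regular_CW_def)

lemma Union_cells: "\<Union>C = topspace X"
  using regular_CW by (simp add: regular_CW_def)

lemma Hausdorff: "Hausdorff_space X"
  using regular_CW by (simp add: regular_CW_def)

lemma continuous_map_characteristic: "e \<in> C \<Longrightarrow> continuous_map (disc_top (dm e)) X (\<sigma> e)"
proof -
  assume "e \<in> C"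
  then have "embedding_map (disc_top (dm e)) X (\<sigma> e)"
    using regular_CW by (simp add: regular_CW_def)
  then show ?thesis
    unfolding embedding_map_def
    using homeomorphic_imp_continuous_map continuous_map_in_subtopology by blast
qed

lemma characteristic_image_open_disc:
  "e \<in> C \<Longrightarrow> \<sigma> e ` (disc_set (dm e) - sphere_set (dm e)) = e"
  using regular_CW by (simp add: regular_CW_def)

definition boundary_cells :: "'a set \<Rightarrow> 'a set set" where
  "boundary_cells e =
     (SOME F. F \<subseteq> C \<and> finite F \<and> (\<forall>f\<in>F. dm f < dm e) \<and> \<sigma> e ` sphere_set (dm e) = \<Union>F)"

lemma boundary_cells:
  assumes "e \<in> C"
  shows "boundary_cells e \<subseteq> C" and "finite (boundary_cells e)"
    and "\<And>f. f \<in> boundary_cells e \<Longrightarrow> dm f < dm e"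
    and "\<sigma> e ` sphere_set (dm e) = \<Union>(boundary_cells e)"
proof -
  have "\<exists>F. F \<subseteq> C \<and> finite F \<and> (\<forall>f\<in>F. dm f < dm e) \<and> \<sigma> e ` sphere_set (dm e) = \<Union>F"
    using regular_CW assms by (simp add: regular_CW_def)
  then have "boundary_cells e \<subseteq> C \<and> finite (boundary_cells e) \<and>
      (\<forall>f\<in>boundary_cells e. dm f < dm e) \<and> \<sigma> e ` sphere_set (dm e) = \<Union>(boundary_cells e)"
    unfolding boundary_cells_def by (rule someI_ex)
  then show "boundary_cells e \<subseteq> C" "finite (boundary_cells e)"
    "\<And>f. f \<in> boundary_cells e \<Longrightarrow> dm f < dm e"
    "\<sigma> e ` sphere_set (dm e) = \<Union>(boundary_cells e)"
    by auto
qed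

lemma closure_of_cell:
  assumes e: "e \<in> C"
  shows "X closure_of e = e \<union> \<Union>(boundary_cells e)"
proof
  have "disc_set (dm e) = (disc_set (dm e) - sphere_set (dm e)) \<union> sphere_set (dm e)"
    by (auto simp: disc_set_def sphere_set_def)
  then have "\<sigma> e ` disc_set (dm e) = e \<union> \<sigma> e ` sphere_set (dm e)"
    using characteristic_image_open_disc[OF e] by (metis image_Un)
  moreover have "closedin X (\<sigma> e ` disc_set (dm e))"
    by (rule compactin_imp_closedin[OF Hausdorff
          image_compactin[OF compactin_disc_top continuous_map_characteristic[OF e]]])
  ultimately have "X closure_of e \<subseteq> e \<union> \<sigma> e ` sphere_set (dm e)"
    by (metis closure_of_minimal Un_upper1)
  then show "X closure_of e \<subseteq> e \<union> \<Union>(boundary_cells e)"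
    by (simp add: boundary_cells(4)[OF e])
next
  have "\<sigma> e ` sphere_set (dm e)
      \<subseteq> \<sigma> e ` (disc_top (dm e) closure_of (disc_set (dm e) - sphere_set (dm e)))"
    using sphere_set_subset_closure_of_open_disc by (rule image_mono)
  also have "\<dots> \<subseteq> X closure_of (\<sigma> e ` (disc_set (dm e) - sphere_set (dm e)))"
    by (rule continuous_map_image_closure_subset[OF continuous_map_characteristic[OF e]])
  also have "\<dots> = X closure_of e"
    using characteristic_image_open_disc[OF e] by simp
  moreover have "e \<subseteq> X closure_of e"
    using Union_cells e by (intro closure_of_subset) blast
  ultimately show "e \<union> \<Union>(boundary_cells e) \<subseteq> X closure_of e"
    by (simp add: boundary_cells(4)[OF e])
qed

lemma cell_subset_closure_of: "e \<in> C \<Longrightarrow> e \<subseteq> X closure_of e"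
  using closure_of_cell by blast

lemma cell_subset_closure_of_if_meets:
  assumes g: "g \<in> C" and e: "e \<in> C" and meets: "g \<inter> X closure_of e \<noteq> {}"
  shows "g \<subseteq> X closure_of e"
proof -
  obtain f where "f \<in> insert e (boundary_cells e)" "g \<inter> f \<noteq> {}"
    using meets closure_of_cell[OF e] by blast
  then have "g = f"
    using cells_disjoint[OF g] boundary_cells(1)[OF e] e by blast
  then show ?thesis
    using \<open>f \<in> insert e (boundary_cells e)\<close> closure_of_cell[OF e] by blast
qed

lemma cell_in_closure_of_imp_boundary:
  assumes g: "g \<in> C" and e: "e \<in> C" and "g \<subseteq> X closure_of e" "g \<noteq> e"
  shows "g \<in> boundary_cells e"
proof -
  obtain p where "p \<in> g" using cell_nonempty[OF g] by blast
  then obtain f where "f \<in> boundary_cells e" "p \<in> f"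
    using assms cells_disjoint[OF g e] closure_of_cell[OF e] by blast
  then show ?thesis
    using cells_disjoint[OF g] boundary_cells(1)[OF e] \<open>p \<in> g\<close> by blast
qed

definition vertices :: "'a set \<Rightarrow> 'a set set" where
  "vertices e = {v \<in> C. dm v = 0 \<and> v \<subseteq> X closure_of e}"

lemma face_vertex: "v \<in> vertices e \<Longrightarrow> is_face X v e"
  by (simp add: vertices_def is_face_def)

lemma vertices_subset_closure_of: "f \<subseteq> X closure_of e \<Longrightarrow> vertices f \<subseteq> vertices e"
  using closure_of_minimal[OF _ closedin_closure_of] unfolding vertices_def by blast

lemma vertices_of_vertex:
  assumes "v \<in> C" "dm v = 0"
  shows "vertices v = {v}"
proof -
  have "X closure_of v = v"
    using closure_of_cell[OF assms(1)] boundary_cells(3)[OF assms(1)] assms(2) by auto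
  then show ?thesis
    using assms cell_nonempty cells_disjoint[OF _ assms(1)] by (fastforce simp: vertices_def)
qed

lemma vertices_nonempty: "e \<in> C \<Longrightarrow> vertices e \<noteq> {}"
proof (induction "dm e" arbitrary: e rule: less_induct)
  case less
  show ?case
  proof (cases "dm e = 0")
    case True
    then show ?thesis using less.prems vertices_of_vertex by blast
  next
    case False
    then obtain f where f: "f \<in> boundary_cells e"
      using sphere_set_nonempty[of "dm e"] boundary_cells(4)[OF less.prems] by fastforce
    then have "vertices f \<noteq> {}"
      using less boundary_cells(1,3) by blast
    moreover have "f \<subseteq> X closure_of e"
      using f closure_of_cell[OF less.prems] by blast
    ultimately show ?thesis
      using vertices_subset_closure_of by blast
  qed
qed

lemma closures_meet_imp_common_vertex:
  assumes "f \<in> C" "g \<in> C" "X closure_of f \<inter> X closure_of g \<noteq> {}"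
  obtains u where "u \<in> vertices f" "u \<in> vertices g"
proof -
  obtain x where x: "x \<in> X closure_of f" "x \<in> X closure_of g"
    using assms(3) by blast
  then have "x \<in> topspace X"
    by (simp add: in_closure_of)
  then obtain h where h: "h \<in> C" "x \<in> h"
    by (metis Union_cells UnionE)
  then have "h \<subseteq> X closure_of f" "h \<subseteq> X closure_of g"
    using assms(1,2) x cell_subset_closure_of_if_meets[OF h(1)] by blast+
  moreover obtain u where "u \<in> vertices h"
    using vertices_nonempty[OF h(1)] by blast
  ultimately show thesis
    using that vertices_subset_closure_of by blast
qed

definition edge_rel :: "'a set \<Rightarrow> ('a set \<times> 'a set) set" where
  "edge_rel e = {(v, w). \<exists>\<epsilon>\<in>C. dm \<epsilon> = 1 \<and> \<epsilon> \<subseteq> X closure_of e \<and> v \<in> vertices \<epsilon> \<and> w \<in> vertices \<epsilon>}"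

lemma edge_rel_subset_closure_of: "f \<subseteq> X closure_of e \<Longrightarrow> edge_rel f \<subseteq> edge_rel e"
  using closure_of_minimal[OF _ closedin_closure_of] unfolding edge_rel_def by blast

theorem vertices_edge_connected:
  "e \<in> C \<Longrightarrow> v \<in> vertices e \<Longrightarrow> w \<in> vertices e \<Longrightarrow> (v, w) \<in> (edge_rel e)\<^sup>*"
proof (induction "dm e" arbitrary: e v w rule: less_induct)
  case less
  note e = less.prems(1)
  consider "dm e = 0" | "dm e = 1" | "dm e \<ge> 2" by linarith
  then show ?case
  proof cases
    case 1
    then show ?thesis using less.prems vertices_of_vertex by simp
  next
    case 2
    then have "(v, w) \<in> edge_rel e"
      using less.prems cell_subset_closure_of by (auto simp: edge_rel_def)
    then show ?thesis by blast
  next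
    case 3
    define F where "F = boundary_cells e"
    define R where "R = (edge_rel e)\<^sup>*"
    have F: "F \<subseteq> C" "finite F" and F_closure: "\<And>f. f \<in> F \<Longrightarrow> f \<subseteq> X closure_of e"
      using boundary_cells[OF e] closure_of_cell[OF e] by (auto simp: F_def)
    have vertex_in_F: "u \<in> F" if "u \<in> vertices e" for u
      using that 3 e by (intro cell_in_closure_of_imp_boundary[of u e, folded F_def])
        (auto simp: vertices_def)
    have face_connected: "(u, u') \<in> R" if "f \<in> F" "u \<in> vertices f" "u' \<in> vertices f" for f u u'
      using less.hyps[of f u u'] that F boundary_cells(3)[OF e] rtrancl_mono[OF
          edge_rel_subset_closure_of[OF F_closure]]
      by (auto simp: F_def R_def)
    define A where "A = {f \<in> F. \<forall>u\<in>vertices f. (v, u) \<in> R}"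
    have v: "v \<in> C" "dm v = 0" and w: "w \<in> C" "dm w = 0"
      using less.prems(2,3) by (auto simp: vertices_def)
    have "v \<in> A"
      using vertex_in_F[OF less.prems(2)] vertices_of_vertex[OF v] by (simp add: A_def R_def)
    have "A = F"
    proof (rule connectedin_Union_closure_partition)
      show "connectedin X (\<Union>F)"
        using connectedin_continuous_map_image[OF continuous_map_characteristic[OF e]
            connectedin_sphere_set[OF 3]] boundary_cells(4)[OF e] by (simp add: F_def)
      show "A \<subseteq> F" "A \<noteq> {}" using \<open>v \<in> A\<close> by (auto simp: A_def)
      show "finite F" "\<And>f. f \<in> F \<Longrightarrow> f \<noteq> {}" using F cell_nonempty by auto
    next
      fix f g assume f: "f \<in> A" and g: "g \<in> F - A"
      show "X closure_of f \<inter> X closure_of g = {}"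
      proof (rule ccontr)
        assume "X closure_of f \<inter> X closure_of g \<noteq> {}"
        moreover have "f \<in> C" "g \<in> C" using f g F by (auto simp: A_def)
        ultimately obtain u where u: "u \<in> vertices f" "u \<in> vertices g"
          using closures_meet_imp_common_vertex by blast
        obtain u' where u': "u' \<in> vertices g" "(v, u') \<notin> R" using g by (auto simp: A_def)
        have "(v, u) \<in> R" using f u(1) by (simp add: A_def)
        moreover have "(u, u') \<in> R" using face_connected g u(2) u'(1) by blast
        ultimately show False
          using u'(2) rtrancl_trans unfolding R_def by metis
      qed
    qed
    then have "w \<in> A"
      using vertex_in_F[OF less.prems(3)] by simp
    then show ?thesis
      using vertices_of_vertex[OF w] by (simp add: A_def R_def)
  qed
qed

lemma cell_grp_antimono:
  assumes cellular: "cellular_groupoid \<Gamma> T X C I"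
    and e: "e \<in> C" and f: "f \<in> C" and face: "f \<subseteq> X closure_of e"
  shows "cell_grp I e \<subseteq> cell_grp I f"
proof -
  have lm: "locally_maximal X I"
    and fiber_const: "\<And>a b. a \<in> e \<Longrightarrow> b \<in> e \<Longrightarrow> fiber I a = fiber I b"
    using cellular e unfolding cellular_groupoid_def by blast+
  define p where "p = (SOME a. a \<in> f)"
  have "p \<in> f" using cell_nonempty[OF f] by (simp add: p_def some_in_eq)
  then have p: "p \<in> X closure_of e" "p \<in> topspace X"
    using face Union_cells f by auto
  obtain U where "openin X U" "p \<in> U" and U: "\<And>u. u \<in> U \<Longrightarrow> fiber I u \<subseteq> fiber I p"
    using locally_maximal_fiber_neighbourhood[OF lm p(2)] by blast
  then obtain y where y: "y \<in> e" "y \<in> U"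
    using p(1) unfolding in_closure_of by blast
  moreover have "(SOME a. a \<in> e) \<in> e"
    using cell_nonempty[OF e] by (simp add: some_in_eq)
  ultimately have "fiber I (SOME a. a \<in> e) \<subseteq> fiber I p"
    using U fiber_const by blast
  then show ?thesis
    unfolding cell_grp_def p_def .
qed

text \<open>Cells of dimension at least 2 take the value at some vertex; by edge-connectedness
  of the vertices the choice does not matter.\<close>

definition extend_skel1 :: "('a set \<Rightarrow> 'b) \<Rightarrow> 'a set \<Rightarrow> 'b" where
  "extend_skel1 \<beta> e = (if dm e \<le> 1 then \<beta> e else \<beta> (SOME v. v \<in> vertices e))"

lemma extend_skel1_skel1: "e \<in> skel_cells C dm 1 \<Longrightarrow> extend_skel1 \<beta> e = \<beta> e"
  by (simp add: extend_skel1_def skel_cells_def)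

lemma extend_skel1_vertex:
  assumes "e \<in> C" "\<not> dm e \<le> 1"
  obtains v where "v \<in> vertices e" "extend_skel1 \<beta> e = \<beta> v"
proof -
  have "(SOME v. v \<in> vertices e) \<in> vertices e"
    using vertices_nonempty[OF assms(1)] by (simp add: some_in_eq)
  then show thesis
    using that assms(2) by (simp add: extend_skel1_def)
qed

lemma vertices_skel_cells: "vertices e \<subseteq> skel_cells C dm k"
  by (auto simp: vertices_def skel_cells_def)

end

section \<open>Conjugacy of representations\<close>

lemma conj_on_eqI:
  fixes G (structure)
  assumes "group G" "\<phi> ` K \<subseteq> carrier G" "\<And>x. x \<in> K \<Longrightarrow> \<psi> x = \<phi> x"
  shows "conj_on G K \<phi> \<psi>"
proof -
  interpret group G by fact
  show ?thesis
    using assms(2,3) unfolding conj_on_def by (intro bexI[of _ \<one>]) auto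
qed

lemma conj_on_sym:
  fixes G (structure)
  assumes "group G" "\<phi> ` K \<subseteq> carrier G" "conj_on G K \<phi> \<psi>"
  shows "conj_on G K \<psi> \<phi>"
proof -
  interpret group G by fact
  obtain g where g: "g \<in> carrier G" "\<And>x. x \<in> K \<Longrightarrow> \<psi> x = inv g \<otimes> \<phi> x \<otimes> g"
    using assms(3) unfolding conj_on_def by blast
  have "\<phi> x = inv (inv g) \<otimes> \<psi> x \<otimes> inv g" if "x \<in> K" for x
  proof -
    have "\<phi> x \<in> carrier G" using assms(2) that by blast
    then show ?thesis using g that by (simp add: m_assoc[symmetric]) (simp add: m_assoc)
  qed
  then show ?thesis
    using g(1) unfolding conj_on_def by (intro bexI[of _ "inv g"]) auto
qed

lemma conj_on_trans:
  fixes G (structure)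
  assumes "group G" "\<phi> ` K \<subseteq> carrier G" "conj_on G K \<phi> \<psi>" "conj_on G K \<psi> \<theta>"
  shows "conj_on G K \<phi> \<theta>"
proof -
  interpret group G by fact
  obtain g where g: "g \<in> carrier G" "\<And>x. x \<in> K \<Longrightarrow> \<psi> x = inv g \<otimes> \<phi> x \<otimes> g"
    using assms(3) unfolding conj_on_def by blast
  obtain h where h: "h \<in> carrier G" "\<And>x. x \<in> K \<Longrightarrow> \<theta> x = inv h \<otimes> \<psi> x \<otimes> h"
    using assms(4) unfolding conj_on_def by blast
  have "\<theta> x = inv (g \<otimes> h) \<otimes> \<phi> x \<otimes> (g \<otimes> h)" if "x \<in> K" for x
  proof -
    have "\<phi> x \<in> carrier G" using assms(2) that by blast
    then show ?thesis using g h that by (simp add: m_assoc inv_mult_group)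
  qed
  then show ?thesis
    using g(1) h(1) unfolding conj_on_def by (intro bexI[of _ "g \<otimes> h"]) auto
qed

lemma conj_on_subset: "K' \<subseteq> K \<Longrightarrow> conj_on G K \<phi> \<psi> \<Longrightarrow> conj_on G K' \<phi> \<psi>"
  unfolding conj_on_def by blast

lemma cont_hom_subset: "K' \<subseteq> K \<Longrightarrow> cont_hom \<Gamma> T K G TG \<phi> \<Longrightarrow> cont_hom \<Gamma> T K' G TG \<phi>"
  unfolding cont_hom_def
  by (metis (no_types, lifting) continuous_map_from_subtopology inf.absorb_iff2
      subtopology_subtopology subsetD)

lemma cont_hom_image_carrier: "cont_hom \<Gamma> T K G TG \<phi> \<Longrightarrow> \<phi> ` K \<subseteq> carrier G"
  unfolding cont_hom_def by blast

lemma cell_rep_subset: "S' \<subseteq> S \<Longrightarrow> cell_rep \<Gamma> T G TG X I S \<beta> \<Longrightarrow> cell_rep \<Gamma> T G TG X I S' \<beta>"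
  unfolding cell_rep_def by blast

lemma bar_rep_subset: "S' \<subseteq> S \<Longrightarrow> bar_rep \<Gamma> T G TG X I S b \<Longrightarrow> bar_rep \<Gamma> T G TG X I S' b"
  unfolding bar_rep_def by blast

lemma rep_rel_iff_conj_on:
  "(\<beta>, \<beta>') \<in> rep_rel \<Gamma> T G TG X I S \<longleftrightarrow>
     cell_rep \<Gamma> T G TG X I S \<beta> \<and> cell_rep \<Gamma> T G TG X I S \<beta>' \<and>
     conj_on G (SIGMA e:S. cell_grp I e) (case_prod \<beta>) (case_prod \<beta>')"
  by (auto simp: rep_rel_def conj_on_def)

lemma cell_rep_image_carrier:
  "cell_rep \<Gamma> T G TG X I S \<beta> \<Longrightarrow> case_prod \<beta> ` (SIGMA e:S. cell_grp I e) \<subseteq> carrier G"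
  unfolding cell_rep_def cont_hom_def by fastforce

lemma rep_rel_subset: "S' \<subseteq> S \<Longrightarrow> rep_rel \<Gamma> T G TG X I S \<subseteq> rep_rel \<Gamma> T G TG X I S'"
  unfolding rep_rel_def cell_rep_def by blast

lemma bar_rel_subset: "S' \<subseteq> S \<Longrightarrow> bar_rel \<Gamma> T G TG X I S \<subseteq> bar_rel \<Gamma> T G TG X I S'"
  unfolding bar_rel_def bar_rep_def by blast

lemma cell_rep_face:
  "cell_rep \<Gamma> T G TG X I S \<beta> \<Longrightarrow> e \<in> S \<Longrightarrow> f \<in> S \<Longrightarrow> is_face X f e \<Longrightarrow> x \<in> cell_grp I e
    \<Longrightarrow> \<beta> e x = \<beta> f x"
  unfolding cell_rep_def by blast

lemma bar_rep_face:
  "bar_rep \<Gamma> T G TG X I S b \<Longrightarrow> e \<in> S \<Longrightarrow> f \<in> S \<Longrightarrow> is_face X f e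
    \<Longrightarrow> conj_on G (cell_grp I e) (b f) (b e)"
  unfolding bar_rep_def by blast

lemma bar_rep_image_carrier:
  "bar_rep \<Gamma> T G TG X I S b \<Longrightarrow> e \<in> S \<Longrightarrow> b e ` cell_grp I e \<subseteq> carrier G"
  using cont_hom_image_carrier unfolding bar_rep_def by blast

lemma res_rep_eq_Image: "res_rep \<Gamma> T G TG X I S = (``) (rep_rel \<Gamma> T G TG X I S)"
  by (simp add: fun_eq_iff res_rep_def)

lemma res_bar_eq_Image: "res_bar \<Gamma> T G TG X I S = (``) (bar_rel \<Gamma> T G TG X I S)"
  by (simp add: fun_eq_iff res_bar_def)

lemma equiv_rep_rel:
  assumes "group G"
  shows "equiv {\<beta>. cell_rep \<Gamma> T G TG X I S \<beta>} (rep_rel \<Gamma> T G TG X I S)"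
proof (rule equivI)
  let ?K = "SIGMA e:S. cell_grp I e"
  show "rep_rel \<Gamma> T G TG X I S \<subseteq> {\<beta>. cell_rep \<Gamma> T G TG X I S \<beta>} \<times> {\<beta>. cell_rep \<Gamma> T G TG X I S \<beta>}"
    by (auto simp: rep_rel_def)
  show "refl_on {\<beta>. cell_rep \<Gamma> T G TG X I S \<beta>} (rep_rel \<Gamma> T G TG X I S)"
  proof (rule refl_onI)
    fix \<beta> assume "\<beta> \<in> {\<beta>. cell_rep \<Gamma> T G TG X I S \<beta>}"
    then have "cell_rep \<Gamma> T G TG X I S \<beta>" by simp
    moreover have "conj_on G ?K (case_prod \<beta>) (case_prod \<beta>)"
      by (rule conj_on_eqI[OF assms cell_rep_image_carrier[OF calculation]]) simp
    ultimately show "(\<beta>, \<beta>) \<in> rep_rel \<Gamma> T G TG X I S"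
      by (simp add: rep_rel_iff_conj_on)
  qed
  show "sym (rep_rel \<Gamma> T G TG X I S)"
  proof (rule symI)
    fix \<beta> \<beta>' assume "(\<beta>, \<beta>') \<in> rep_rel \<Gamma> T G TG X I S"
    then show "(\<beta>', \<beta>) \<in> rep_rel \<Gamma> T G TG X I S"
      by (auto simp: rep_rel_iff_conj_on intro: conj_on_sym[OF assms cell_rep_image_carrier])
  qed
  show "trans (rep_rel \<Gamma> T G TG X I S)"
  proof (rule transI)
    fix \<beta>1 \<beta>2 \<beta>3
    assume "(\<beta>1, \<beta>2) \<in> rep_rel \<Gamma> T G TG X I S" "(\<beta>2, \<beta>3) \<in> rep_rel \<Gamma> T G TG X I S"
    then show "(\<beta>1, \<beta>3) \<in> rep_rel \<Gamma> T G TG X I S"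
      by (auto simp: rep_rel_iff_conj_on intro: conj_on_trans[OF assms cell_rep_image_carrier])
  qed
qed

lemma equiv_bar_rel:
  assumes "group G"
  shows "equiv {b. bar_rep \<Gamma> T G TG X I S b} (bar_rel \<Gamma> T G TG X I S)"
proof -
  note carrier = bar_rep_image_carrier[of \<Gamma> T G TG X I S]
  show ?thesis
  proof (rule equivI)
    show "bar_rel \<Gamma> T G TG X I S \<subseteq> {b. bar_rep \<Gamma> T G TG X I S b} \<times> {b. bar_rep \<Gamma> T G TG X I S b}"
      by (auto simp: bar_rel_def)
    show "refl_on {b. bar_rep \<Gamma> T G TG X I S b} (bar_rel \<Gamma> T G TG X I S)"
    proof (rule refl_onI)
      fix b assume "b \<in> {b. bar_rep \<Gamma> T G TG X I S b}"
      then show "(b, b) \<in> bar_rel \<Gamma> T G TG X I S"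
        using conj_on_eqI[OF assms carrier] by (simp add: bar_rel_def)
    qed
    show "sym (bar_rel \<Gamma> T G TG X I S)"
    proof (rule symI)
      fix b b' assume "(b, b') \<in> bar_rel \<Gamma> T G TG X I S"
      then show "(b', b) \<in> bar_rel \<Gamma> T G TG X I S"
        by (auto simp: bar_rel_def intro: conj_on_sym[OF assms carrier])
    qed
    show "trans (bar_rel \<Gamma> T G TG X I S)"
    proof (rule transI)
      fix b1 b2 b3
      assume "(b1, b2) \<in> bar_rel \<Gamma> T G TG X I S" "(b2, b3) \<in> bar_rel \<Gamma> T G TG X I S"
      then show "(b1, b3) \<in> bar_rel \<Gamma> T G TG X I S"
        by (auto simp: bar_rel_def intro: conj_on_trans[OF assms carrier])
    qed
  qed
qed

section \<open>Restricting quotients to a coarser relation\<close>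

lemma Image_class_coarser_equiv:
  assumes "equiv B s" "r \<subseteq> s" "(x, x) \<in> r"
  shows "s `` (r `` {x}) = s `` {x}"
proof -
  have "trans s" using assms(1) by (rule equivE)
  then show ?thesis using assms(2,3) by (blast dest: transD)
qed

lemma inj_on_Image_quotient:
  assumes r: "equiv A r" and s: "equiv B s" and "r \<subseteq> s"
    and reflect: "\<And>x y. x \<in> A \<Longrightarrow> y \<in> A \<Longrightarrow> (x, y) \<in> s \<Longrightarrow> (x, y) \<in> r"
  shows "inj_on ((``) s) (A // r)"
proof (rule inj_onI)
  fix P Q assume "P \<in> A // r" "Q \<in> A // r" and eq: "s `` P = s `` Q"
  then obtain x y where P: "P = r `` {x}" "x \<in> A" and Q: "Q = r `` {y}" "y \<in> A"
    by (auto elim!: quotientE)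
  have xy: "(x, x) \<in> r" "(y, y) \<in> r"
    using r P(2) Q(2) by (auto dest: equiv_class_self)
  then have "x \<in> B" "y \<in> B"
    using \<open>r \<subseteq> s\<close> equiv_type[OF s] by blast+
  moreover have "s `` {x} = s `` {y}"
    using eq P(1) Q(1) xy Image_class_coarser_equiv[OF s \<open>r \<subseteq> s\<close>] by simp
  ultimately have "(x, y) \<in> s"
    using eq_equiv_class_iff[OF s] by simp
  then show "P = Q"
    using reflect P Q equiv_class_eq[OF r] by blast
qed

lemma Image_quotient_eq:
  assumes r: "equiv A r" and s: "equiv B s" and "r \<subseteq> s"
    and lift: "\<And>y. y \<in> B \<Longrightarrow> \<exists>x\<in>A. (x, y) \<in> s"
  shows "(``) s ` (A // r) = B // s"
proof
  show "(``) s ` (A // r) \<subseteq> B // s"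
  proof
    fix P assume "P \<in> (``) s ` (A // r)"
    then obtain x where "x \<in> A" "P = s `` (r `` {x})" by (auto elim!: quotientE)
    moreover have "(x, x) \<in> r" using r \<open>x \<in> A\<close> by (auto dest: equiv_class_self)
    moreover have "x \<in> B" using calculation(3) \<open>r \<subseteq> s\<close> equiv_type[OF s] by blast
    ultimately show "P \<in> B // s"
      using Image_class_coarser_equiv[OF s \<open>r \<subseteq> s\<close>] by (auto intro!: quotientI)
  qed
  show "B // s \<subseteq> (``) s ` (A // r)"
  proof
    fix P assume "P \<in> B // s"
    then obtain y where "y \<in> B" "P = s `` {y}" by (auto elim!: quotientE)
    then obtain x where "x \<in> A" "(x, y) \<in> s" using lift by blast
    then have "P = s `` (r `` {x})"
      using \<open>P = s `` {y}\<close> Image_class_coarser_equiv[OF s \<open>r \<subseteq> s\<close>] equiv_class_eq[OF s]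
        equiv_class_self[OF r] by simp
    then show "P \<in> (``) s ` (A // r)"
      using \<open>x \<in> A\<close> by (auto intro!: quotientI)
  qed
qed

section \<open>Restriction to the 0- and 1-skeleton\<close>

locale cellular_representations = regular_cw X C dm \<sigma>
  for X :: "'a topology" and C dm \<sigma> +
  fixes \<Gamma> :: "'g monoid" and T :: "'g topology" and I :: "('g \<times> 'a) set"
    and G :: "'h monoid" and TG :: "'h topology"
  assumes cellular: "cellular_groupoid \<Gamma> T X C I" and group_G: "group G"
begin

lemma cell_grp_subset_vertex: "e \<in> C \<Longrightarrow> v \<in> vertices e \<Longrightarrow> cell_grp I e \<subseteq> cell_grp I v"
  by (simp add: vertices_def cell_grp_antimono[OF cellular])

lemma rep_rel_from_vertices:
  assumes S: "skel_cells C dm 0 \<subseteq> S"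
    and \<beta>: "cell_rep \<Gamma> T G TG X I C \<beta>1" "cell_rep \<Gamma> T G TG X I C \<beta>2"
    and rel: "(\<beta>1, \<beta>2) \<in> rep_rel \<Gamma> T G TG X I S"
  shows "(\<beta>1, \<beta>2) \<in> rep_rel \<Gamma> T G TG X I C"
proof -
  obtain g where g: "g \<in> carrier G" and conj:
    "\<And>e x. e \<in> S \<Longrightarrow> x \<in> cell_grp I e \<Longrightarrow> \<beta>2 e x = inv\<^bsub>G\<^esub> g \<otimes>\<^bsub>G\<^esub> \<beta>1 e x \<otimes>\<^bsub>G\<^esub> g"
    using rel unfolding rep_rel_def by blast
  have "\<beta>2 e x = inv\<^bsub>G\<^esub> g \<otimes>\<^bsub>G\<^esub> \<beta>1 e x \<otimes>\<^bsub>G\<^esub> g" if e: "e \<in> C" and x: "x \<in> cell_grp I e" for e x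
  proof -
    obtain v where v: "v \<in> vertices e" using vertices_nonempty[OF e] by blast
    then have "v \<in> C" "v \<in> S" "x \<in> cell_grp I v"
      using S x vertices_skel_cells cell_grp_subset_vertex[OF e v] by (auto simp: vertices_def)
    then show ?thesis
      using cell_rep_face[OF \<beta>(1) e _ face_vertex[OF v] x] cell_rep_face[OF \<beta>(2) e _ face_vertex[OF v] x]
        conj by simp
  qed
  then show ?thesis
    using g \<beta> unfolding rep_rel_def by blast
qed

lemma bar_rel_from_vertices:
  assumes S: "skel_cells C dm 0 \<subseteq> S"
    and b: "bar_rep \<Gamma> T G TG X I C b1" "bar_rep \<Gamma> T G TG X I C b2"
    and rel: "(b1, b2) \<in> bar_rel \<Gamma> T G TG X I S"
  shows "(b1, b2) \<in> bar_rel \<Gamma> T G TG X I C"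
proof -
  have "conj_on G (cell_grp I e) (b1 e) (b2 e)" if e: "e \<in> C" for e
  proof -
    obtain v where v: "v \<in> vertices e" using vertices_nonempty[OF e] by blast
    then have "v \<in> C" "v \<in> S" and K: "cell_grp I e \<subseteq> cell_grp I v"
      using S vertices_skel_cells cell_grp_subset_vertex[OF e] by (auto simp: vertices_def)
    have carrier: "b1 v ` cell_grp I e \<subseteq> carrier G" "b1 e ` cell_grp I e \<subseteq> carrier G"
      using bar_rep_image_carrier[OF b(1) \<open>v \<in> C\<close>] bar_rep_image_carrier[OF b(1) e] K by auto
    have "conj_on G (cell_grp I e) (b1 e) (b1 v)"
      by (rule conj_on_sym[OF group_G carrier(1) bar_rep_face[OF b(1) e \<open>v \<in> C\<close> face_vertex[OF v]]])
    moreover have "conj_on G (cell_grp I v) (b1 v) (b2 v)"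
      using rel \<open>v \<in> S\<close> by (simp add: bar_rel_def)
    then have "conj_on G (cell_grp I e) (b1 v) (b2 v)"
      by (rule conj_on_subset[OF K])
    ultimately have "conj_on G (cell_grp I e) (b1 e) (b2 v)"
      by (rule conj_on_trans[OF group_G carrier(2)])
    then show ?thesis
      by (rule conj_on_trans[OF group_G carrier(2) _ bar_rep_face[OF b(2) e \<open>v \<in> C\<close> face_vertex[OF v]]])
  qed
  then show ?thesis
    using b unfolding bar_rel_def by blast
qed

lemma inj_on_res_rep:
  assumes "skel_cells C dm 0 \<subseteq> S" "S \<subseteq> C"
  shows "inj_on (res_rep \<Gamma> T G TG X I S) (Rep_cell \<Gamma> T G TG X I C)"
  unfolding res_rep_eq_Image Rep_cell_def
  by (rule inj_on_Image_quotient[OF equiv_rep_rel[OF group_G] equiv_rep_rel[OF group_G]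
        rep_rel_subset[OF assms(2)]]) (simp add: rep_rel_from_vertices[OF assms(1)])

lemma inj_on_res_bar:
  assumes "skel_cells C dm 0 \<subseteq> S" "S \<subseteq> C"
  shows "inj_on (res_bar \<Gamma> T G TG X I S) (Rep_bar \<Gamma> T G TG X I C)"
  unfolding res_bar_eq_Image Rep_bar_def
  by (rule inj_on_Image_quotient[OF equiv_bar_rel[OF group_G] equiv_bar_rel[OF group_G]
        bar_rel_subset[OF assms(2)]]) (simp add: bar_rel_from_vertices[OF assms(1)])

lemma cont_hom_extend_skel1:
  assumes hom: "\<And>e. e \<in> skel_cells C dm 1 \<Longrightarrow> cont_hom \<Gamma> T (cell_grp I e) G TG (\<beta> e)"
    and e: "e \<in> C"
  shows "cont_hom \<Gamma> T (cell_grp I e) G TG (extend_skel1 \<beta> e)"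
proof (cases "dm e \<le> 1")
  case True
  then have "e \<in> skel_cells C dm 1" using e by (simp add: skel_cells_def)
  then show ?thesis using hom by (simp add: extend_skel1_skel1)
next
  case False
  then obtain v where v: "v \<in> vertices e" "extend_skel1 \<beta> e = \<beta> v"
    using extend_skel1_vertex[OF e] by blast
  then show ?thesis
    using cont_hom_subset[OF cell_grp_subset_vertex[OF e v(1)] hom[OF subsetD[OF vertices_skel_cells v(1)]]]
    by simp
qed

lemma cell_rep_vertices_agree:
  assumes \<beta>: "cell_rep \<Gamma> T G TG X I (skel_cells C dm 1) \<beta>" and e: "e \<in> C"
    and v: "v \<in> vertices e" and w: "w \<in> vertices e" and x: "x \<in> cell_grp I e"
  shows "\<beta> v x = \<beta> w x"
  using vertices_edge_connected[OF e v w]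
proof (induction rule: rtrancl_induct)
  case (step u w')
  then obtain \<epsilon> where \<epsilon>: "\<epsilon> \<in> C" "dm \<epsilon> = 1" "\<epsilon> \<subseteq> X closure_of e"
    and u: "u \<in> vertices \<epsilon>" and w': "w' \<in> vertices \<epsilon>"
    by (auto simp: edge_rel_def)
  have "\<epsilon> \<in> skel_cells C dm 1" "x \<in> cell_grp I \<epsilon>"
    using \<epsilon> x cell_grp_antimono[OF cellular e] by (auto simp: skel_cells_def)
  then have "\<beta> u x = \<beta> \<epsilon> x" "\<beta> w' x = \<beta> \<epsilon> x"
    using cell_rep_face[OF \<beta> _ subsetD[OF vertices_skel_cells u] face_vertex[OF u]]
      cell_rep_face[OF \<beta> _ subsetD[OF vertices_skel_cells w'] face_vertex[OF w']] by simp_all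
  then show ?case
    using step.IH by simp
qed simp

lemma extend_skel1_rep_vertex:
  assumes \<beta>: "cell_rep \<Gamma> T G TG X I (skel_cells C dm 1) \<beta>" and e: "e \<in> C"
    and u: "u \<in> vertices e" and x: "x \<in> cell_grp I e"
  shows "extend_skel1 \<beta> e x = \<beta> u x"
proof (cases "dm e \<le> 1")
  case True
  then have "e \<in> skel_cells C dm 1" using e by (simp add: skel_cells_def)
  then show ?thesis
    using cell_rep_face[OF \<beta> _ subsetD[OF vertices_skel_cells u] face_vertex[OF u] x]
    by (simp add: extend_skel1_skel1)
next
  case False
  then obtain v where "v \<in> vertices e" "extend_skel1 \<beta> e = \<beta> v"
    using extend_skel1_vertex[OF e] by blast
  then show ?thesis
    using cell_rep_vertices_agree[OF \<beta> e _ u x] by simp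
qed

lemma cell_rep_extend_skel1:
  assumes \<beta>: "cell_rep \<Gamma> T G TG X I (skel_cells C dm 1) \<beta>"
  shows "cell_rep \<Gamma> T G TG X I C (extend_skel1 \<beta>)"
  unfolding cell_rep_def
proof (intro conjI ballI impI)
  fix e assume "e \<in> C"
  then show "cont_hom \<Gamma> T (cell_grp I e) G TG (extend_skel1 \<beta> e)"
    using \<beta> by (intro cont_hom_extend_skel1) (auto simp: cell_rep_def)
next
  fix e f x assume e: "e \<in> C" and f: "f \<in> C" and "is_face X f e" and x: "x \<in> cell_grp I e"
  obtain u where u: "u \<in> vertices f" using vertices_nonempty[OF f] by blast
  have "f \<subseteq> X closure_of e" using \<open>is_face X f e\<close> by (simp add: is_face_def)
  then have "u \<in> vertices e" "x \<in> cell_grp I f"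
    using u x vertices_subset_closure_of cell_grp_antimono[OF cellular e f] by blast+
  then show "extend_skel1 \<beta> e x = extend_skel1 \<beta> f x"
    using extend_skel1_rep_vertex[OF \<beta> e _ x] extend_skel1_rep_vertex[OF \<beta> f u] by simp
qed

lemma rep_rel_extend_skel1:
  assumes \<beta>: "cell_rep \<Gamma> T G TG X I (skel_cells C dm 1) \<beta>"
  shows "(extend_skel1 \<beta>, \<beta>) \<in> rep_rel \<Gamma> T G TG X I (skel_cells C dm 1)"
proof -
  have ext: "cell_rep \<Gamma> T G TG X I (skel_cells C dm 1) (extend_skel1 \<beta>)"
    by (rule cell_rep_subset[OF skel_cells_subset cell_rep_extend_skel1[OF \<beta>]])
  have "conj_on G (SIGMA e:skel_cells C dm 1. cell_grp I e) (case_prod (extend_skel1 \<beta>)) (case_prod \<beta>)"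
    by (rule conj_on_eqI[OF group_G cell_rep_image_carrier[OF ext]]) (auto simp: extend_skel1_skel1)
  then show ?thesis
    using ext \<beta> by (simp add: rep_rel_iff_conj_on)
qed

lemma res_rep_skel1_image:
  "res_rep \<Gamma> T G TG X I (skel_cells C dm 1) ` Rep_cell \<Gamma> T G TG X I C
     = Rep_cell \<Gamma> T G TG X I (skel_cells C dm 1)"
  unfolding res_rep_eq_Image Rep_cell_def
  by (rule Image_quotient_eq[OF equiv_rep_rel[OF group_G] equiv_rep_rel[OF group_G]
        rep_rel_subset[OF skel_cells_subset]])
    (blast intro: cell_rep_extend_skel1 rep_rel_extend_skel1)

lemma bar_rep_vertices_conj:
  assumes b: "bar_rep \<Gamma> T G TG X I (skel_cells C dm 1) b" and e: "e \<in> C"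
    and v: "v \<in> vertices e" and w: "w \<in> vertices e"
  shows "conj_on G (cell_grp I e) (b v) (b w)"
proof -
  have carrier: "b u ` cell_grp I e \<subseteq> carrier G" if "u \<in> vertices e" for u
    using bar_rep_image_carrier[OF b subsetD[OF vertices_skel_cells that]]
      cell_grp_subset_vertex[OF e that] by blast
  show ?thesis
    using vertices_edge_connected[OF e v w]
  proof (induction rule: rtrancl_induct)
    case base
    show ?case by (rule conj_on_eqI[OF group_G carrier[OF v]]) simp
  next
    case (step u w')
    then obtain \<epsilon> where \<epsilon>: "\<epsilon> \<in> C" "dm \<epsilon> = 1" "\<epsilon> \<subseteq> X closure_of e"
      and u: "u \<in> vertices \<epsilon>" and w': "w' \<in> vertices \<epsilon>"
      by (auto simp: edge_rel_def)
    have "\<epsilon> \<in> skel_cells C dm 1" and K: "cell_grp I e \<subseteq> cell_grp I \<epsilon>"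
      using \<epsilon> cell_grp_antimono[OF cellular e] by (auto simp: skel_cells_def)
    have ue: "u \<in> vertices e" and we: "w' \<in> vertices e"
      using \<epsilon>(3) u w' vertices_subset_closure_of by blast+
    have "conj_on G (cell_grp I e) (b u) (b \<epsilon>)"
      using bar_rep_face[OF b \<open>\<epsilon> \<in> skel_cells C dm 1\<close> subsetD[OF vertices_skel_cells u] face_vertex[OF u]]
      by (rule conj_on_subset[OF K])
    moreover have "conj_on G (cell_grp I e) (b w') (b \<epsilon>)"
      using bar_rep_face[OF b \<open>\<epsilon> \<in> skel_cells C dm 1\<close> subsetD[OF vertices_skel_cells w'] face_vertex[OF w']]
      by (rule conj_on_subset[OF K])
    ultimately have "conj_on G (cell_grp I e) (b u) (b w')"
      using conj_on_trans[OF group_G carrier[OF ue]] conj_on_sym[OF group_G carrier[OF we]] by blast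
    then show ?case
      using step.IH conj_on_trans[OF group_G carrier[OF v]] by blast
  qed
qed

lemma extend_skel1_bar_vertex:
  assumes b: "bar_rep \<Gamma> T G TG X I (skel_cells C dm 1) b" and e: "e \<in> C" and u: "u \<in> vertices e"
  shows "conj_on G (cell_grp I e) (b u) (extend_skel1 b e)"
proof (cases "dm e \<le> 1")
  case True
  then have "e \<in> skel_cells C dm 1" using e by (simp add: skel_cells_def)
  then show ?thesis
    using bar_rep_face[OF b _ subsetD[OF vertices_skel_cells u] face_vertex[OF u]]
    by (simp add: extend_skel1_skel1)
next
  case False
  then obtain v where "v \<in> vertices e" "extend_skel1 b e = b v"
    using extend_skel1_vertex[OF e] by blast
  then show ?thesis
    using bar_rep_vertices_conj[OF b e u] by simp
qed

lemma bar_rep_extend_skel1: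
  assumes b: "bar_rep \<Gamma> T G TG X I (skel_cells C dm 1) b"
  shows "bar_rep \<Gamma> T G TG X I C (extend_skel1 b)"
proof -
  have hom: "cont_hom \<Gamma> T (cell_grp I e) G TG (extend_skel1 b e)" if "e \<in> C" for e
    using b that by (intro cont_hom_extend_skel1) (auto simp: bar_rep_def)
  have "conj_on G (cell_grp I e) (extend_skel1 b f) (extend_skel1 b e)"
    if e: "e \<in> C" and f: "f \<in> C" and "is_face X f e" for e f
  proof -
    obtain u where u: "u \<in> vertices f" using vertices_nonempty[OF f] by blast
    have "f \<subseteq> X closure_of e" using \<open>is_face X f e\<close> by (simp add: is_face_def)
    then have ue: "u \<in> vertices e" and K: "cell_grp I e \<subseteq> cell_grp I f"
      using u vertices_subset_closure_of cell_grp_antimono[OF cellular e f] by blast+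
    have carrier: "b u ` cell_grp I e \<subseteq> carrier G" "extend_skel1 b f ` cell_grp I e \<subseteq> carrier G"
      using bar_rep_image_carrier[OF b subsetD[OF vertices_skel_cells u]] cell_grp_subset_vertex[OF f u]
        cont_hom_image_carrier[OF hom[OF f]] K by blast+
    have "conj_on G (cell_grp I e) (extend_skel1 b f) (b u)"
      by (rule conj_on_sym[OF group_G carrier(1) conj_on_subset[OF K extend_skel1_bar_vertex[OF b f u]]])
    then show ?thesis
      by (rule conj_on_trans[OF group_G carrier(2) _ extend_skel1_bar_vertex[OF b e ue]])
  qed
  then show ?thesis
    using hom by (simp add: bar_rep_def)
qed

lemma bar_rel_extend_skel1:
  assumes b: "bar_rep \<Gamma> T G TG X I (skel_cells C dm 1) b"
  shows "(extend_skel1 b, b) \<in> bar_rel \<Gamma> T G TG X I (skel_cells C dm 1)"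
proof -
  have "conj_on G (cell_grp I e) (extend_skel1 b e) (b e)" if "e \<in> skel_cells C dm 1" for e
    using that conj_on_eqI[OF group_G bar_rep_image_carrier[OF b that]] by (simp add: extend_skel1_skel1)
  moreover have "bar_rep \<Gamma> T G TG X I (skel_cells C dm 1) (extend_skel1 b)"
    by (rule bar_rep_subset[OF skel_cells_subset bar_rep_extend_skel1[OF b]])
  ultimately show ?thesis
    using b by (simp add: bar_rel_def)
qed

lemma res_bar_skel1_image:
  "res_bar \<Gamma> T G TG X I (skel_cells C dm 1) ` Rep_bar \<Gamma> T G TG X I C
     = Rep_bar \<Gamma> T G TG X I (skel_cells C dm 1)"
  unfolding res_bar_eq_Image Rep_bar_def
  by (rule Image_quotient_eq[OF equiv_bar_rel[OF group_G] equiv_bar_rel[OF group_G]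
        bar_rel_subset[OF skel_cells_subset]])
    (blast intro: bar_rep_extend_skel1 bar_rel_extend_skel1)

end

theorem proposition5p2:
  fixes \<Gamma> :: "'g monoid" and T\<Gamma> :: "'g topology"
    and X :: "'a topology" and C :: "'a set set" and dm :: "'a set \<Rightarrow> nat"
    and \<sigma> :: "'a set \<Rightarrow> (nat \<Rightarrow> real) \<Rightarrow> 'a"
    and I :: "('g \<times> 'a) set"
    and G :: "'h monoid" and TG :: "'h topology"
  assumes "topological_group \<Gamma> T\<Gamma>"
    and "regular_CW X C dm \<sigma>"
    and "cellular_groupoid \<Gamma> T\<Gamma> X C I"
    and "topological_group G TG"
  shows
    "inj_on (res_rep \<Gamma> T\<Gamma> G TG X I (skel_cells C dm 0)) (Rep_cell \<Gamma> T\<Gamma> G TG X I C) \<and>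
     inj_on (res_bar \<Gamma> T\<Gamma> G TG X I (skel_cells C dm 0)) (Rep_bar \<Gamma> T\<Gamma> G TG X I C) \<and>
     bij_betw (res_rep \<Gamma> T\<Gamma> G TG X I (skel_cells C dm 1))
       (Rep_cell \<Gamma> T\<Gamma> G TG X I C) (Rep_cell \<Gamma> T\<Gamma> G TG X I (skel_cells C dm 1)) \<and>
     bij_betw (res_bar \<Gamma> T\<Gamma> G TG X I (skel_cells C dm 1))
       (Rep_bar \<Gamma> T\<Gamma> G TG X I C) (Rep_bar \<Gamma> T\<Gamma> G TG X I (skel_cells C dm 1))"
proof -
  have "group G"
    using assms(4) by (simp add: topological_group_def)
  then interpret cellular_representations X C dm \<sigma> \<Gamma> T\<Gamma> I G TG
    by (simp add: cellular_representations_def cellular_representations_axioms_def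
        regular_cw_def assms(2,3))
  have skel01: "skel_cells C dm 0 \<subseteq> skel_cells C dm 1"
    by (auto simp: skel_cells_def)
  show ?thesis
    unfolding bij_betw_def
    using inj_on_res_rep[OF order_refl skel_cells_subset] inj_on_res_bar[OF order_refl skel_cells_subset]
      inj_on_res_rep[OF skel01 skel_cells_subset] inj_on_res_bar[OF skel01 skel_cells_subset]
      res_rep_skel1_image res_bar_skel1_image
    by simp
qed

end
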